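(* Let $n, l$ be positive integers and $p$ a prime such that $p^l$ divides $n$ but $p^{l+1}$ does not divide $n$. Let $S \subseteq \mathbb{Z}_n$ with $0 \notin S$, $S=-S$, $|S| = p^l - 1$, such that the circulant graph $\mathrm{Cay}(\mathbb{Z}_n,S)$ is connected. Then $\mathrm{Cay}(\mathbb{Z}_n,S)$ admits a perfect code if and only if $s \not\equiv s' \pmod{p^l}$ for all distinct $s, s' \in S \cup \{0\}$.
   Context: $\mathbb{Z}_n$ is the additive group of integers modulo $n$; elements are identified with integers in $\{0,1,\dots,n-1\}$ (since $p^l \mid n$, congruence modulo $p^l$ is well defined on $\mathbb{Z}_n$). For an inverse-closed subset $S$ of $\mathbb{Z}_n$ not containing $0$, the circulant graph $\mathrm{Cay}(\mathbb{Z}_n,S)$ has vertex set $\mathbb{Z}_n$, with $u,v$ adjacent iff $v-u\in S$; its degree is $|S|$. A perfect code in a graph $\Gamma=(V,E)$ is a subset $C\subseteq V$ that is an independent set such that every vertex of $V\setminus C$ is adjacent to exactly one vertex of $C$. *)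

theory Defs
  imports Main "HOL-Number_Theory.Cong"
begin

text \<open>Z_n is modelled by the carrier {0..<n} of natural numbers, with arithmetic mod n.\<close>

definition zn :: "nat \<Rightarrow> nat set" where
  "zn n = {0..<n}"

definition zneg :: "nat \<Rightarrow> nat \<Rightarrow> nat" where
  "zneg n x = (n - x) mod n"

definition cay_adj :: "nat \<Rightarrow> nat set \<Rightarrow> nat \<Rightarrow> nat \<Rightarrow> bool" where
  "cay_adj n S u v \<longleftrightarrow> u \<in> zn n \<and> v \<in> zn n \<and> (v + n - u) mod n \<in> S"

definition cay_connected :: "nat \<Rightarrow> nat set \<Rightarrow> bool" where
  "cay_connected n S \<longleftrightarrow> (\<forall>u\<in>zn n. \<forall>v\<in>zn n. (cay_adj n S)\<^sup>*\<^sup>* u v)"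

definition perfect_code :: "nat \<Rightarrow> nat set \<Rightarrow> nat set \<Rightarrow> bool" where
  "perfect_code n S C \<longleftrightarrow> C \<subseteq> zn n
     \<and> (\<forall>u\<in>C. \<forall>v\<in>C. \<not> cay_adj n S u v)
     \<and> (\<forall>v\<in>zn n - C. \<exists>!c. c \<in> C \<and> cay_adj n S v c)"

definition has_perfect_code :: "nat \<Rightarrow> nat set \<Rightarrow> bool" where
  "has_perfect_code n S \<longleftrightarrow> (\<exists>C. perfect_code n S C)"

end

theory Submission
  imports Defs "HOL-Number_Theory.Residues" "HOL-Computational_Algebra.Polynomial"
begin

(*
  Put D = S \<union> {0} and q = p ^ l = |D|. A perfect code C is the same as a factorisation
  Z_n = C - D in which every element is written uniquely as c - d, so |C| = n / q is prime
  to p. Following Tijdeman, qC - D is again such a factorisation: over (Z/p)[x]/(x^n - 1)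
  the factorisation says that the product of the mask polynomials of C and -D is the
  all-ones polynomial U; the Frobenius map turns the mask polynomial of C into that of qC,
  up to the power C(x)^q, and C(x) acts on U as the scalar |C|, whose (q - 1)-st power is 1
  by Fermat. Comparing coefficients, qC - D covers every residue. As qC lies in the subgroup
  qZ_n, the elements of D are then pairwise incongruent mod q. Conversely, if they are, the
  multiples of q form a perfect code.
*)

lemma diff_dvd_power_diff:
  fixes x y :: "'a::comm_ring_1"
  shows "x - y dvd x ^ n - y ^ n"
  using power_diff_sumr2[of x n y] by (simp only: dvd_triv_left)

lemma prime_dvd_add_power_prime_diff:
  fixes a b :: "'a::comm_ring_1"
  assumes "prime p"
  shows "of_nat p dvd (a + b) ^ p - a ^ p - b ^ p"
proof -
  have p0: "p > 0" using assms prime_gt_0_nat by blast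
  have "(a + b) ^ p = (\<Sum>k\<le>p. of_nat (p choose k) * a ^ k * b ^ (p - k))"
    by (rule binomial_ring)
  also have "{..p} = insert 0 (insert p {1..<p})" using p0 by auto
  finally have "(a + b) ^ p - a ^ p - b ^ p
      = (\<Sum>k\<in>{1..<p}. of_nat (p choose k) * a ^ k * b ^ (p - k))"
    using p0 by (simp add: algebra_simps)
  moreover have "of_nat p dvd of_nat (p choose k) * a ^ k * b ^ (p - k)" if k: "k \<in> {1..<p}" for k
  proof -
    obtain t where "p choose k = p * t"
      using dvd_choose_prime[of k p] assms k by (auto elim: dvdE)
    then show ?thesis by (simp add: mult.assoc)
  qed
  ultimately show ?thesis by (metis (no_types) dvd_sum)
qed

lemma prime_dvd_add_power_prime_power_diff:
  fixes a b :: "'a::comm_ring_1"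
  assumes "prime p"
  shows "of_nat p dvd (a + b) ^ (p ^ k) - a ^ (p ^ k) - b ^ (p ^ k)"
proof (induction k)
  case (Suc k)
  let ?X = "(a + b) ^ (p ^ k)" and ?Y = "a ^ (p ^ k) + b ^ (p ^ k)"
  have "of_nat p dvd ?X - ?Y"
    using Suc.IH by (simp add: diff_diff_eq)
  then have "of_nat p dvd ?X ^ p - ?Y ^ p"
    using diff_dvd_power_diff dvd_trans by blast
  moreover have "of_nat p dvd ?Y ^ p - (a ^ (p ^ k)) ^ p - (b ^ (p ^ k)) ^ p"
    by (rule prime_dvd_add_power_prime_diff[OF assms])
  ultimately have "of_nat p dvd (?X ^ p - ?Y ^ p) + (?Y ^ p - (a ^ (p ^ k)) ^ p - (b ^ (p ^ k)) ^ p)"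
    by (rule dvd_add)
  then show ?case
    by (simp add: power_mult[symmetric] mult.commute algebra_simps)
qed simp

lemma prime_dvd_sum_power_prime_power_diff:
  fixes f :: "'b \<Rightarrow> 'a::comm_ring_1"
  assumes "prime p" and "finite A"
  shows "of_nat p dvd (\<Sum>x\<in>A. f x) ^ (p ^ k) - (\<Sum>x\<in>A. f x ^ (p ^ k))"
  using assms(2)
proof (induction A rule: finite_induct)
  case empty
  then show ?case using assms(1) prime_gt_0_nat by (simp add: power_0_left)
next
  case (insert x A)
  have "of_nat p dvd ((f x + sum f A) ^ (p ^ k) - f x ^ (p ^ k) - sum f A ^ (p ^ k))
      + (sum f A ^ (p ^ k) - (\<Sum>x\<in>A. f x ^ (p ^ k)))"
    using prime_dvd_add_power_prime_power_diff[OF assms(1)] insert.IH by (rule dvd_add)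
  then show ?case
    using insert by (simp add: algebra_simps)
qed

lemma fermat_theorem_prime_power:
  fixes p m :: nat
  assumes "prime p" and "\<not> p dvd m"
  shows "[m ^ (p ^ k - 1) = 1] (mod p)"
proof -
  have "[p = 1] (mod p - 1)"
    using prime_gt_0_nat[OF assms(1)] by (subst cong_altdef_nat) auto
  then have "[p ^ k = 1 ^ k] (mod p - 1)"
    by (rule cong_pow)
  then have "p - 1 dvd p ^ k - 1"
    unfolding power_one by (rule cong_to_1_nat)
  then obtain t where t: "p ^ k - 1 = (p - 1) * t" ..
  have "[(m ^ (p - 1)) ^ t = 1 ^ t] (mod p)"
    using fermat_theorem[OF assms] by (rule cong_pow)
  then show ?thesis
    by (simp only: t power_mult power_one)
qed

definition mask_poly :: "('a \<Rightarrow> nat) \<Rightarrow> 'a set \<Rightarrow> int poly" where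
  "mask_poly f A = (\<Sum>x\<in>A. monom 1 (f x))"

(* Congruence modulo the ideal (d, x ^ n - 1) of Z[x]; for prime d this is equality in the
   group algebra of Z_n over Z/d. *)
definition poly_cong :: "nat \<Rightarrow> nat \<Rightarrow> int poly \<Rightarrow> int poly \<Rightarrow> bool" where
  "poly_cong d n f g \<longleftrightarrow> (\<exists>a b. f - g = smult (int d) a + (monom 1 n - 1) * b)"

lemma poly_cong_refl [simp]: "poly_cong d n f f"
  unfolding poly_cong_def by (rule exI[of _ 0], rule exI[of _ 0]) simp

lemma poly_cong_sym: "poly_cong d n f g \<Longrightarrow> poly_cong d n g f"
  unfolding poly_cong_def
proof (elim exE)
  fix a b
  assume "f - g = smult (int d) a + (monom 1 n - 1) * b"
  then have "g - f = smult (int d) (- a) + (monom 1 n - 1) * (- b)"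
    by (simp add: algebra_simps)
  then show "\<exists>a b. g - f = smult (int d) a + (monom 1 n - 1) * b" by blast
qed

lemma poly_cong_trans [trans]:
  "poly_cong d n f g \<Longrightarrow> poly_cong d n g h \<Longrightarrow> poly_cong d n f h"
  unfolding poly_cong_def
proof (elim exE)
  fix a b a' b'
  assume "f - g = smult (int d) a + (monom 1 n - 1) * b"
    and "g - h = smult (int d) a' + (monom 1 n - 1) * b'"
  then have "f - h = smult (int d) (a + a') + (monom 1 n - 1) * (b + b')"
    by (simp add: algebra_simps smult_add_right)
  then show "\<exists>a b. f - h = smult (int d) a + (monom 1 n - 1) * b" by blast
qed

lemma poly_cong_mult_left: "poly_cong d n f g \<Longrightarrow> poly_cong d n (h * f) (h * g)"
  unfolding poly_cong_def
proof (elim exE)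
  fix a b
  assume "f - g = smult (int d) a + (monom 1 n - 1) * b"
  then have "h * f - h * g = h * (smult (int d) a + (monom 1 n - 1) * b)"
    by (simp flip: right_diff_distrib)
  also have "\<dots> = smult (int d) (h * a) + (monom 1 n - 1) * (h * b)"
    by (simp add: distrib_left mult.left_commute)
  finally have "h * f - h * g = smult (int d) (h * a) + (monom 1 n - 1) * (h * b)" .
  then show "\<exists>a b. h * f - h * g = smult (int d) a + (monom 1 n - 1) * b" by blast
qed

lemma poly_cong_mult_right: "poly_cong d n f g \<Longrightarrow> poly_cong d n (f * h) (g * h)"
  using poly_cong_mult_left by (metis mult.commute)

lemma poly_congI_of_nat_dvd:
  assumes "of_nat d dvd f - g"
  shows "poly_cong d n f g"
proof -
  obtain a where "f - g = smult (int d) a"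
    using assms by (auto simp: of_nat_poly elim!: dvdE)
  then have "f - g = smult (int d) a + (monom 1 n - 1) * 0" by simp
  then show ?thesis unfolding poly_cong_def by blast
qed

lemma poly_congI_xn_minus_1_dvd:
  assumes "monom 1 n - 1 dvd f - g"
  shows "poly_cong d n f g"
proof -
  obtain b where "f - g = (monom 1 n - 1) * b"
    using assms by (auto elim!: dvdE)
  then have "f - g = smult (int d) 0 + (monom 1 n - 1) * b" by simp
  then show ?thesis unfolding poly_cong_def by blast
qed

lemma poly_cong_of_nat_mult:
  assumes "[a = b] (mod d)"
  shows "poly_cong d n (of_nat a * f) (of_nat b * f)"
proof (rule poly_congI_of_nat_dvd)
  obtain t where t: "int a - int b = int d * t"
    using assms by (auto simp: cong_int_iff[symmetric] cong_iff_dvd_diff elim: dvdE)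
  have "of_nat a * f - of_nat b * f = smult (int a - int b) f"
    by (simp add: of_nat_poly smult_diff_left)
  also have "\<dots> = of_nat d * smult t f"
    using t by (simp add: of_nat_poly mult.commute)
  finally show "of_nat d dvd of_nat a * f - of_nat b * f" by (simp only: dvd_triv_left)
qed

lemma mask_poly_mult:
  "mask_poly f A * mask_poly g B = mask_poly (\<lambda>(a, b). f a + g b) (A \<times> B)"
  unfolding mask_poly_def sum_product sum.cartesian_product
  by (simp add: mult_monom case_prod_beta)

lemma mask_poly_bij_betw: "bij_betw f A B \<Longrightarrow> mask_poly f A = mask_poly id B"
  unfolding mask_poly_def by (simp add: sum.reindex_bij_betw)

lemma coeff_mask_poly:
  assumes "finite A"
  shows "coeff (mask_poly f A) i = int (card {x \<in> A. f x = i})"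
  using assms unfolding mask_poly_def coeff_sum by (simp add: coeff_monom sum.If_cases Int_def)

lemma mask_poly_mod_cong: "poly_cong d n (mask_poly f A) (mask_poly (\<lambda>x. f x mod n) A)"
proof (rule poly_congI_xn_minus_1_dvd)
  have "monom 1 n - 1 dvd monom 1 a - (monom 1 (a mod n) :: int poly)" for a
  proof -
    have "monom (1::int) a = monom 1 (a mod n) * monom 1 n ^ (a div n)"
      by (metis monom_power mult_monom mult.right_neutral mod_mult_div_eq power_one)
    then have "monom 1 a - monom 1 (a mod n) = monom 1 (a mod n) * (monom 1 n ^ (a div n) - 1 :: int poly)"
      by (simp only: right_diff_distrib mult.right_neutral)
    moreover have "monom 1 n - 1 dvd monom 1 n ^ (a div n) - (1 :: int poly)"
      using diff_dvd_power_diff[of "monom 1 n" 1 "a div n"] by simp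
    ultimately show ?thesis
      by (metis dvd_mult)
  qed
  then have "monom 1 n - 1 dvd (\<Sum>x\<in>A. monom 1 (f x) - (monom 1 (f x mod n) :: int poly))"
    by (simp add: dvd_sum)
  then show "monom 1 n - 1 dvd mask_poly f A - mask_poly (\<lambda>x. f x mod n) A"
    unfolding mask_poly_def by (simp add: sum_subtractf)
qed

lemma mask_poly_mult_mod_cong:
  "poly_cong d n (mask_poly f A * mask_poly g B) (mask_poly (\<lambda>(a, b). (f a + g b) mod n) (A \<times> B))"
proof -
  have "(\<lambda>z. (case z of (a, b) \<Rightarrow> f a + g b) mod n) = (\<lambda>(a, b). (f a + g b) mod n)"
    by auto
  then show ?thesis
    using mask_poly_mod_cong[of d n "\<lambda>(a, b). f a + g b" "A \<times> B"] by (simp add: mask_poly_mult)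
qed

lemma mask_poly_power_cong:
  assumes "prime p" and "finite A"
  shows "poly_cong p n (mask_poly f A ^ (p ^ k)) (mask_poly (\<lambda>x. p ^ k * f x) A)"
proof (rule poly_congI_of_nat_dvd)
  have "(\<Sum>x\<in>A. monom 1 (f x) ^ (p ^ k)) = mask_poly (\<lambda>x. p ^ k * f x) A"
    by (simp add: mask_poly_def monom_power mult.commute)
  then show "of_nat p dvd mask_poly f A ^ (p ^ k) - mask_poly (\<lambda>x. p ^ k * f x) A"
    using prime_dvd_sum_power_prime_power_diff[OF assms, of "\<lambda>x. monom (1::int) (f x)" k]
    unfolding mask_poly_def by simp
qed

lemma mask_poly_mult_ones_cong:
  "poly_cong d n (mask_poly f A * mask_poly id {..<n}) (of_nat (card A) * mask_poly id {..<n})"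
proof (rule poly_congI_xn_minus_1_dvd)
  let ?U = "mask_poly id {..<n}"
  have "monom 1 n - 1 dvd (monom 1 a - 1) * ?U" for a
  proof -
    have "monom 1 n - 1 = (monom 1 1 - 1) * ?U"
      using power_diff_1_eq[of "monom (1::int) 1" n] by (simp add: mask_poly_def monom_power)
    moreover have "monom 1 1 - 1 dvd monom (1::int) a - 1"
      using diff_dvd_power_diff[of "monom (1::int) 1" 1 a] by (simp add: monom_power)
    ultimately show ?thesis by (simp add: mult_dvd_mono)
  qed
  moreover have "mask_poly f A * ?U - of_nat (card A) * ?U = (\<Sum>x\<in>A. (monom 1 (f x) - 1) * ?U)"
    by (simp add: mask_poly_def sum_distrib_right left_diff_distrib sum_subtractf)
  ultimately show "monom 1 n - 1 dvd mask_poly f A * ?U - of_nat (card A) * ?U"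
    by (simp add: dvd_sum)
qed

lemma mask_poly_power_mult_ones_cong:
  "poly_cong d n (mask_poly f A ^ k * mask_poly id {..<n}) (of_nat (card A ^ k) * mask_poly id {..<n})"
proof (induction k)
  case (Suc k)
  let ?U = "mask_poly id {..<n}"
  have "mask_poly f A ^ Suc k * ?U = mask_poly f A * (mask_poly f A ^ k * ?U)"
    by (simp add: mult.assoc)
  also have "poly_cong d n \<dots> (mask_poly f A * (of_nat (card A ^ k) * ?U))"
    by (rule poly_cong_mult_left[OF Suc.IH])
  also have "\<dots> = of_nat (card A ^ k) * (mask_poly f A * ?U)"
    by (simp only: mult.left_commute)
  also have "poly_cong d n \<dots> (of_nat (card A ^ k) * (of_nat (card A) * ?U))"
    by (rule poly_cong_mult_left[OF mask_poly_mult_ones_cong])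
  also have "\<dots> = of_nat (card A ^ Suc k) * ?U"
    by (simp add: mult.assoc mult.commute)
  finally show ?case .
qed simp

lemma poly_cong_coeff_dvd:
  assumes "n > 0" and "poly_cong d n f g" and high: "\<forall>i\<ge>n. coeff f i = coeff g i"
  shows "int d dvd coeff f i - coeff g i"
proof -
  obtain a b where ab: "f - g = smult (int d) a + (monom 1 n - 1) * b"
    using assms(2) unfolding poly_cong_def by blast
  have coeff_diff: "coeff f i - coeff g i
      = int d * coeff a i + (if i < n then 0 else coeff b (i - n)) - coeff b i" for i
    using arg_cong[OF ab, of "\<lambda>r. coeff r i"] by (simp add: left_diff_distrib coeff_monom_mult)
  (* coeff b i and coeff b (i + n) agree mod d, and b vanishes above its degree *)
  have downward: "\<forall>i. degree b < i + j \<longrightarrow> int d dvd coeff b i" for j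
  proof (induction j)
    case 0
    then show ?case by (simp add: coeff_eq_0)
  next
    case (Suc j)
    show ?case
    proof (intro allI impI)
      fix i assume "degree b < i + Suc j"
      then have "int d dvd coeff b (i + n)"
        using Suc.IH \<open>n > 0\<close> by simp
      moreover have "coeff b i = coeff b (i + n) - int d * coeff a (i + n)"
        using coeff_diff[of "i + n"] high by simp
      ultimately show "int d dvd coeff b i" by simp
    qed
  qed
  have "int d dvd coeff b j" for j
    using downward[of "Suc (degree b)"] by simp
  then show ?thesis
    using coeff_diff[of i] by simp
qed

lemma surj_if_mask_poly_cong_ones:
  assumes "n > 0" and "finite A" and "h ` A \<subseteq> {..<n}" and "d \<noteq> 1"
    and cong: "poly_cong d n (mask_poly h A) (mask_poly id {..<n})"
  shows "h ` A = {..<n}"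
proof
  have coeff_ones: "coeff (mask_poly id {..<n}) i = (if i < n then 1 else 0)" for i
  proof -
    have "{x \<in> {..<n}. id x = i} = (if i < n then {i} else {})" by auto
    then show ?thesis by (simp only: coeff_mask_poly[OF finite_lessThan]) simp
  qed
  have empty_fibre: "{x \<in> A. h x = i} = {}" if "i \<ge> n" for i
    using assms(3) that by (auto simp: image_subset_iff)
  show "{..<n} \<subseteq> h ` A"
  proof
    fix i assume "i \<in> {..<n}"
    have "\<forall>j\<ge>n. coeff (mask_poly h A) j = coeff (mask_poly id {..<n}) j"
      by (simp add: coeff_mask_poly[OF assms(2)] coeff_ones empty_fibre)
    then have "int d dvd coeff (mask_poly h A) i - coeff (mask_poly id {..<n}) i"
      by (rule poly_cong_coeff_dvd[OF assms(1) cong])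
    then have "int d dvd int (card {x \<in> A. h x = i}) - 1"
      using \<open>i \<in> {..<n}\<close> by (simp add: coeff_mask_poly[OF assms(2)] coeff_ones)
    then have "{x \<in> A. h x = i} \<noteq> {}"
    proof (intro notI)
      assume "int d dvd int (card {x \<in> A. h x = i}) - 1" and "{x \<in> A. h x = i} = {}"
      then have "int d dvd int 1" by simp
      then have "d dvd 1" by (simp only: int_dvd_int_iff)
      then show False using assms(4) by simp
    qed
    then show "i \<in> h ` A" by blast
  qed
qed (rule assms(3))

lemma mask_poly_dilation_cong:
  assumes p: "prime p" and "finite C" and "\<not> p dvd card C"
    and tile: "poly_cong p n (mask_poly id C * Q) (mask_poly id {..<n})"
  shows "poly_cong p n (mask_poly (\<lambda>c. p ^ k * c) C * Q) (mask_poly id {..<n})"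
proof -
  define q where "q = p ^ k"
  let ?C = "mask_poly id C" and ?U = "mask_poly id {..<n}"
  have "q > 0"
    using p prime_gt_0_nat unfolding q_def by simp
  have frobenius: "poly_cong p n (mask_poly (\<lambda>c. q * c) C) (?C ^ q)"
    using poly_cong_sym[OF mask_poly_power_cong[OF p assms(2), of n id k]] unfolding q_def by simp
  have fermat: "[card C ^ (q - 1) = 1] (mod p)"
    unfolding q_def by (rule fermat_theorem_prime_power[OF p assms(3)])
  have "poly_cong p n (mask_poly (\<lambda>c. q * c) C * Q) (?C ^ q * Q)"
    using frobenius by (rule poly_cong_mult_right)
  also have "?C ^ q * Q = ?C ^ (q - 1) * (?C * Q)"
    using \<open>q > 0\<close> by (cases q) (simp_all add: ac_simps)
  also have "poly_cong p n \<dots> (?C ^ (q - 1) * ?U)"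
    using tile by (rule poly_cong_mult_left)
  also have "poly_cong p n \<dots> (of_nat (card C ^ (q - 1)) * ?U)"
    by (rule mask_poly_power_mult_ones_cong)
  also have "poly_cong p n \<dots> (of_nat 1 * ?U)"
    using fermat by (rule poly_cong_of_nat_mult)
  finally show ?thesis
    unfolding q_def by simp
qed

lemma tiling_dilation:
  fixes e :: "'b \<Rightarrow> nat"
  assumes p: "prime p" and "n > 0" and "finite C" and "finite D" and "\<not> p dvd card C"
    and tiling: "bij_betw (\<lambda>(c, d). (c + e d) mod n) (C \<times> D) {..<n}"
  shows "bij_betw (\<lambda>(c, d). (p ^ k * c + e d) mod n) (C \<times> D) {..<n}"
proof -
  define h where "h = (\<lambda>(c, d). (p ^ k * c + e d) mod n)"
  have "poly_cong p n (mask_poly id C * mask_poly e D) (mask_poly id {..<n})"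
    using mask_poly_mult_mod_cong[of p n id C e D] mask_poly_bij_betw[OF tiling] by simp
  then have "poly_cong p n (mask_poly (\<lambda>c. p ^ k * c) C * mask_poly e D) (mask_poly id {..<n})"
    by (rule mask_poly_dilation_cong[OF p assms(3,5)])
  then have cong: "poly_cong p n (mask_poly h (C \<times> D)) (mask_poly id {..<n})"
    using poly_cong_trans[OF mask_poly_mult_mod_cong[THEN poly_cong_sym]] unfolding h_def by blast
  have "h ` (C \<times> D) \<subseteq> {..<n}"
    using \<open>n > 0\<close> by (auto simp: h_def)
  then have "h ` (C \<times> D) = {..<n}"
    using surj_if_mask_poly_cong_ones[OF \<open>n > 0\<close> _ _ _ cong] assms(3,4) prime_gt_1_nat[OF p] by simp
  moreover have "card (C \<times> D) = n"
    using bij_betw_same_card[OF tiling] by simp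
  ultimately show ?thesis
    unfolding bij_betw_def h_def
    using assms(3,4) by (simp add: inj_on_iff_eq_card)
qed

lemma add_diff_mod_eq_iff:
  fixes c v s n :: nat
  assumes "c < n" and "v < n" and "s < n"
  shows "(c + n - v) mod n = s \<longleftrightarrow> c = (v + s) mod n"
  using assms by (auto simp: mod_if)

lemma add_diff_mod_eq_swap:
  fixes c d v n :: nat
  assumes "c < n" and "d < n" and "v < n"
  shows "(c + (n - d)) mod n = v \<longleftrightarrow> (c + n - v) mod n = d"
proof -
  have "(c + (n - d)) mod n = v \<longleftrightarrow> c = (d + v) mod n"
    using add_diff_mod_eq_iff[of c n d v] assms by (simp add: Nat.add_diff_assoc)
  also have "\<dots> \<longleftrightarrow> (c + n - v) mod n = d"
    using add_diff_mod_eq_iff[of c n v d] assms by (simp add: add.commute)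
  finally show ?thesis .
qed

lemma dvd_iff_dvd_add_diff_mod:
  fixes c v n q :: nat
  assumes "q dvd n" and "v \<le> c + n"
  shows "q dvd c \<longleftrightarrow> q dvd v + (c + n - v) mod n"
proof -
  have "[(c + n - v) mod n = c + n - v] (mod q)"
    unfolding cong_def by (rule mod_mod_cancel[OF assms(1)])
  then have "[v + (c + n - v) mod n = v + (c + n - v)] (mod q)"
    by (rule cong_add_lcancel_nat[THEN iffD2])
  also have "v + (c + n - v) = c + n"
    using assms(2) by simp
  also have "[c + n = c + 0] (mod q)"
    using assms(1) by (intro cong_add) (simp_all add: cong_0_iff)
  finally show ?thesis
    by (simp add: cong_dvd_iff)
qed

lemma closed_nbhd_iff:
  assumes "c \<in> zn n" and "v \<in> zn n"
  shows "(c + n - v) mod n \<in> insert 0 S \<longleftrightarrow> c = v \<or> cay_adj n S v c"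
  using assms add_diff_mod_eq_iff[of c n v 0] by (auto simp: cay_adj_def zn_def)

lemma perfect_code_iff_unique_closed_nbhd:
  assumes "C \<subseteq> zn n" and "0 \<notin> S"
  shows "perfect_code n S C \<longleftrightarrow> (\<forall>v\<in>zn n. \<exists>!c\<in>C. (c + n - v) mod n \<in> insert 0 S)"
proof -
  define closed where "closed v c \<longleftrightarrow> (c + n - v) mod n \<in> insert 0 S" for v c
  have closed_iff: "closed v c \<longleftrightarrow> c = v \<or> cay_adj n S v c" if "c \<in> zn n" and "v \<in> zn n" for c v
    unfolding closed_def by (rule closed_nbhd_iff[OF that])
  have irrefl: "\<not> cay_adj n S v v" for v
    using assms(2) by (simp add: cay_adj_def)
  have "perfect_code n S C \<longleftrightarrow> (\<forall>v\<in>zn n. \<exists>!c\<in>C. closed v c)"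
  proof
    assume "perfect_code n S C"
    then have indep: "\<And>u v. u \<in> C \<Longrightarrow> v \<in> C \<Longrightarrow> \<not> cay_adj n S u v"
      and unique: "\<And>v. v \<in> zn n - C \<Longrightarrow> \<exists>!c. c \<in> C \<and> cay_adj n S v c"
      unfolding perfect_code_def by blast+
    show "\<forall>v\<in>zn n. \<exists>!c\<in>C. closed v c"
    proof
      fix v assume v: "v \<in> zn n"
      have closed_C: "closed v c \<longleftrightarrow> c = v \<or> cay_adj n S v c" if "c \<in> C" for c
        using closed_iff that v assms(1) by blast
      show "\<exists>!c\<in>C. closed v c"
      proof (cases "v \<in> C")
        case True
        then show ?thesis
          using closed_C indep by blast
      next
        case False
        then show ?thesis
          using closed_C unique[of v] v by blast
      qed
    qed
  next
    assume unique: "\<forall>v\<in>zn n. \<exists>!c\<in>C. closed v c"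
    have "\<not> cay_adj n S u v" if "u \<in> C" and "v \<in> C" for u v
    proof
      assume adj: "cay_adj n S u v"
      have "u \<in> zn n" and "v \<in> zn n"
        using that assms(1) by auto
      then have "closed u u" and "closed u v"
        using closed_iff adj by auto
      then have "u = v"
        using unique \<open>u \<in> zn n\<close> that by blast
      then show False
        using adj irrefl by simp
    qed
    moreover have "\<exists>!c. c \<in> C \<and> cay_adj n S v c" if "v \<in> zn n - C" for v
    proof -
      have "closed v c \<longleftrightarrow> cay_adj n S v c" if "c \<in> C" for c
        using closed_iff \<open>v \<in> zn n - C\<close> that assms(1) by blast
      then show ?thesis
        using unique that by blast
    qed
    ultimately show "perfect_code n S C"
      unfolding perfect_code_def using assms(1) by blast
  qed
  then show ?thesis
    unfolding closed_def .
qed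

lemma tiling_if_unique_closed_nbhd:
  fixes n :: nat
  assumes "C \<subseteq> {..<n}" and "D \<subseteq> {..<n}"
    and unique: "\<forall>v\<in>{..<n}. \<exists>!c\<in>C. (c + n - v) mod n \<in> D"
  shows "bij_betw (\<lambda>(c, d). (c + (n - d)) mod n) (C \<times> D) {..<n}"
proof (rule bij_betw_imageI)
  have preimage: "(c + (n - d)) mod n = v \<longleftrightarrow> d = (c + n - v) mod n"
    if "c \<in> C" and "d \<in> D" and "v < n" for c d v
  proof -
    have "c < n" and "d < n"
      using that(1,2) assms(1,2) by auto
    from add_diff_mod_eq_swap[OF this that(3)] show ?thesis
      by auto
  qed
  show "inj_on (\<lambda>(c, d). (c + (n - d)) mod n) (C \<times> D)"
  proof (rule inj_onI, clarify)
    fix c d c' d'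
    assume cd: "c \<in> C" "d \<in> D" "c' \<in> C" "d' \<in> D"
      and eq: "(c + (n - d)) mod n = (c' + (n - d')) mod n"
    define v where "v = (c + (n - d)) mod n"
    have "v < n"
      using cd assms(1) unfolding v_def by auto
    have "d = (c + n - v) mod n"
      using preimage[OF cd(1,2) \<open>v < n\<close>] v_def by simp
    moreover have "d' = (c' + n - v) mod n"
      using preimage[OF cd(3,4) \<open>v < n\<close>] v_def eq by simp
    ultimately have "c = c'"
      using unique \<open>v < n\<close> cd by blast
    then show "c = c' \<and> d = d'"
      using \<open>d = (c + n - v) mod n\<close> \<open>d' = (c' + n - v) mod n\<close> by simp
  qed
  show "(\<lambda>(c, d). (c + (n - d)) mod n) ` (C \<times> D) = {..<n}"
  proof
    show "(\<lambda>(c, d). (c + (n - d)) mod n) ` (C \<times> D) \<subseteq> {..<n}"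
      using assms(1) by auto
    show "{..<n} \<subseteq> (\<lambda>(c, d). (c + (n - d)) mod n) ` (C \<times> D)"
    proof
      fix v assume "v \<in> {..<n}"
      then obtain c where "c \<in> C" and "(c + n - v) mod n \<in> D"
        using unique by blast
      moreover have "(c + (n - (c + n - v) mod n)) mod n = v"
        using preimage[OF \<open>c \<in> C\<close> \<open>(c + n - v) mod n \<in> D\<close>] \<open>v \<in> {..<n}\<close> by simp
      ultimately show "v \<in> (\<lambda>(c, d). (c + (n - d)) mod n) ` (C \<times> D)"
        by (intro rev_image_eqI[of "(c, (c + n - v) mod n)"]) simp_all
    qed
  qed
qed

lemma residues_of_dilated_tiling:
  fixes q n :: nat
  assumes "n > 0" and "q dvd n"
    and "bij_betw (\<lambda>(c, d). (q * c + e d) mod n) (C \<times> D) {..<n}"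
  shows "\<forall>r\<in>{..<q}. \<exists>d\<in>D. e d mod q = r"
proof
  fix r assume "r \<in> {..<q}"
  then have "r < q" by simp
  moreover have "q \<le> n"
    using dvd_imp_le[OF assms(2,1)] .
  ultimately have "r \<in> (\<lambda>(c, d). (q * c + e d) mod n) ` (C \<times> D)"
    using assms(3) by (simp add: bij_betw_def)
  then obtain c d where "d \<in> D" and r: "r = (q * c + e d) mod n"
    by auto
  then have "r mod q = e d mod q"
    using mod_mod_cancel[OF assms(2)] by simp
  then have "e d mod q = r"
    using \<open>r < q\<close> by simp
  with \<open>d \<in> D\<close> show "\<exists>d\<in>D. e d mod q = r" ..
qed

lemma multiples_unique_closed_nbhd:
  assumes "n > 0" and "q dvd n" and "D \<subseteq> zn n"
    and residues: "\<forall>r\<in>{..<q}. \<exists>d\<in>D. d mod q = r" and inj: "inj_on (\<lambda>d. d mod q) D"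
  shows "\<forall>v\<in>zn n. \<exists>!c\<in>{x \<in> zn n. q dvd x}. (c + n - v) mod n \<in> D"
proof
  fix v assume "v \<in> zn n"
  then have "v < n"
    by (simp add: zn_def)
  have "q > 0"
    using assms(1,2) by (auto intro: Nat.gr0I)
  have multiple_iff: "q dvd c \<longleftrightarrow> q dvd v + (c + n - v) mod n" for c
    using dvd_iff_dvd_add_diff_mod[OF assms(2), where v = v and c = c] \<open>v < n\<close> by simp
  obtain d where "d \<in> D" and d_mod: "d mod q = (n - v) mod q"
    using residues mod_less_divisor[OF \<open>q > 0\<close>] by auto
  have "d < n"
    using \<open>d \<in> D\<close> assms(3) by (auto simp: zn_def)
  define c where "c = (v + d) mod n"
  have "c < n" and "(c + n - v) mod n = d"
    using add_diff_mod_eq_iff[of c n v d] \<open>v < n\<close> \<open>d < n\<close> assms(1) by (simp_all add: c_def)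
  have "[v + d = v + (n - v)] (mod q)"
    using d_mod unfolding cong_def[symmetric] by (rule cong_add_lcancel_nat[THEN iffD2])
  also have "v + (n - v) = n"
    using \<open>v < n\<close> by simp
  also have "[n = 0] (mod q)"
    using assms(2) by (simp add: cong_0_iff)
  finally have "q dvd v + d"
    by (simp add: cong_0_iff)
  then have "q dvd c"
    unfolding multiple_iff[of c] \<open>(c + n - v) mod n = d\<close> .
  show "\<exists>!c\<in>{x \<in> zn n. q dvd x}. (c + n - v) mod n \<in> D"
  proof (rule ex1I[of _ c])
    show "c \<in> {x \<in> zn n. q dvd x} \<and> (c + n - v) mod n \<in> D"
      using \<open>c < n\<close> \<open>q dvd c\<close> \<open>(c + n - v) mod n = d\<close> \<open>d \<in> D\<close>
      by (simp add: zn_def)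
    fix c' assume c': "c' \<in> {x \<in> zn n. q dvd x} \<and> (c' + n - v) mod n \<in> D"
    define d' where "d' = (c' + n - v) mod n"
    have "[v + d' = 0] (mod q)"
      using c' multiple_iff[of c'] unfolding d'_def by (simp add: cong_0_iff)
    also have "[0 = v + d] (mod q)"
      using \<open>q dvd v + d\<close> by (simp only: cong_0_iff[symmetric] cong_sym)
    finally have "[d' = d] (mod q)"
      by (rule cong_add_lcancel_nat[THEN iffD1])
    then have "d' = d"
      using inj_onD[OF inj] c' \<open>d \<in> D\<close> unfolding d'_def cong_def by blast
    moreover have "c' = (v + d') mod n"
      using add_diff_mod_eq_iff[of c' n v d'] c' \<open>v < n\<close> assms(1)
      unfolding d'_def by (simp add: zn_def)
    ultimately show "c' = c"
      unfolding c_def by simp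
  qed
qed

lemma inj_on_mod_if_perfect_code:
  assumes p: "prime p" and "n > 0" and "p ^ l dvd n" and "\<not> p ^ (l + 1) dvd n"
    and "S \<subseteq> zn n" and "0 \<notin> S" and card_D: "card (insert 0 S) = p ^ l"
    and "perfect_code n S C"
  shows "inj_on (\<lambda>d. d mod p ^ l) (insert 0 S)"
proof -
  define q where "q = p ^ l"
  define D where "D = insert 0 S"
  have "C \<subseteq> zn n"
    using assms(8) by (simp add: perfect_code_def)
  have "D \<subseteq> zn n" and "finite C" and "finite D" and "q > 0" and "q dvd n"
    using assms(2,3,5) \<open>C \<subseteq> zn n\<close> p prime_gt_0_nat
    by (auto simp: D_def q_def zn_def intro: finite_subset)
  have "\<forall>v\<in>zn n. \<exists>!c\<in>C. (c + n - v) mod n \<in> D"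
    using perfect_code_iff_unique_closed_nbhd[OF \<open>C \<subseteq> zn n\<close> assms(6)] assms(8)
    unfolding D_def by (rule iffD1)
  then have tiling: "bij_betw (\<lambda>(c, d). (c + (n - d)) mod n) (C \<times> D) {..<n}"
    using \<open>C \<subseteq> zn n\<close> \<open>D \<subseteq> zn n\<close> unfolding zn_def atLeast0LessThan
    by (intro tiling_if_unique_closed_nbhd)
  have "card C * q = n"
    using bij_betw_same_card[OF tiling] card_D by (simp add: card_cartesian_product D_def q_def)
  then have "\<not> p dvd card C"
    using assms(4) unfolding q_def by (auto simp: mult.commute elim!: dvdE)
  then have "bij_betw (\<lambda>(c, d). (q * c + (n - d)) mod n) (C \<times> D) {..<n}"
    unfolding q_def
    by (rule tiling_dilation[where e = "\<lambda>d. n - d",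
          OF p \<open>n > 0\<close> \<open>finite C\<close> \<open>finite D\<close> _ tiling])
  then have "\<forall>r\<in>{..<q}. \<exists>d\<in>D. (n - d) mod q = r"
    by (rule residues_of_dilated_tiling[OF \<open>n > 0\<close> \<open>q dvd n\<close>])
  moreover have "card D = card {..<q}"
    using card_D by (simp add: D_def q_def)
  moreover have "(\<lambda>d. (n - d) mod q) ` D \<subseteq> {..<q}"
    using \<open>q > 0\<close> by auto
  ultimately have inj: "inj_on (\<lambda>d. (n - d) mod q) D"
    using surjective_iff_injective_gen[OF \<open>finite D\<close> finite_lessThan] by (simp only:)
  show ?thesis
  proof (rule inj_onI)
    fix d d' assume "d \<in> insert 0 S" and "d' \<in> insert 0 S" and "d mod p ^ l = d' mod p ^ l"
    moreover have "d \<le> n" and "d' \<le> n"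
      using calculation(1,2) \<open>D \<subseteq> zn n\<close> by (auto simp: D_def zn_def)
    ultimately have "(n - d) mod q = (n - d') mod q"
      using cong_diff_nat[of n n q d d'] by (simp add: cong_def q_def)
    then show "d = d'"
      using inj_onD[OF inj] \<open>d \<in> insert 0 S\<close> \<open>d' \<in> insert 0 S\<close> unfolding D_def by blast
  qed
qed

lemma perfect_code_multiples_if_inj_on_mod:
  assumes "n > 0" and "q dvd n" and "S \<subseteq> zn n" and "0 \<notin> S"
    and "card (insert 0 S) = q" and inj: "inj_on (\<lambda>d. d mod q) (insert 0 S)"
  shows "perfect_code n S {x \<in> zn n. q dvd x}"
proof -
  have "finite (insert 0 S)" and "insert 0 S \<subseteq> zn n"
    using assms(1,3) by (auto simp: zn_def intro: finite_subset)
  have "q > 0"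
    using assms(1,2) by (auto intro: Nat.gr0I)
  have "card (insert 0 S) = card {..<q}"
    using assms(5) by simp
  moreover have "(\<lambda>d. d mod q) ` insert 0 S \<subseteq> {..<q}"
    using \<open>q > 0\<close> by auto
  ultimately have "\<forall>r\<in>{..<q}. \<exists>d\<in>insert 0 S. d mod q = r"
    using surjective_iff_injective_gen[OF \<open>finite (insert 0 S)\<close> finite_lessThan] inj by (simp only:)
  then have "\<forall>v\<in>zn n. \<exists>!c\<in>{x \<in> zn n. q dvd x}. (c + n - v) mod n \<in> insert 0 S"
    by (rule multiples_unique_closed_nbhd[OF assms(1,2) \<open>insert 0 S \<subseteq> zn n\<close> _ inj])
  moreover have "{x \<in> zn n. q dvd x} \<subseteq> zn n"
    by blast
  ultimately show ?thesis
    using perfect_code_iff_unique_closed_nbhd[OF _ assms(4)] by blast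
qed

theorem theorem1p2:
  fixes n l p :: nat and S :: "nat set"
  assumes "n > 0" and "l > 0" and "prime p"
    and "p ^ l dvd n" and "\<not> p ^ (l + 1) dvd n"
    and "S \<subseteq> zn n" and "0 \<notin> S"
    and "\<forall>s\<in>S. zneg n s \<in> S"
    and "card S = p ^ l - 1"
    and "cay_connected n S"
  shows "has_perfect_code n S \<longleftrightarrow>
           (\<forall>s\<in>S \<union> {0}. \<forall>s'\<in>S \<union> {0}. s \<noteq> s' \<longrightarrow> \<not> [s = s'] (mod p ^ l))"
proof -
  have "finite S"
    using assms(6) by (auto simp: zn_def intro: finite_subset)
  then have card: "card (insert 0 S) = p ^ l"
    using assms(3,7,9) prime_gt_0_nat by simp
  have "(\<forall>s\<in>S \<union> {0}. \<forall>s'\<in>S \<union> {0}. s \<noteq> s' \<longrightarrow> \<not> [s = s'] (mod p ^ l))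
      \<longleftrightarrow> inj_on (\<lambda>d. d mod p ^ l) (insert 0 S)"
    by (auto simp: inj_on_def cong_def)
  moreover have "has_perfect_code n S \<longleftrightarrow> inj_on (\<lambda>d. d mod p ^ l) (insert 0 S)"
    using inj_on_mod_if_perfect_code[OF assms(3,1,4,5,6,7) card]
      perfect_code_multiples_if_inj_on_mod[OF assms(1,4,6,7) card]
    unfolding has_perfect_code_def by blast
  ultimately show ?thesis
    by simp
qed

end
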